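(* For the submodule $M=[(z-w)^2]$ of $H^2(\mathbb D^2)$, the eigenvalues of the core operator $C$ of $M$ are exactly \[ 0,\quad 1,\quad \pm\frac{2}{n+2}\ \ (n\ge1). \] In particular the second largest eigenvalue of $C$ is $2/3$.
   Context: $H^2(\mathbb D^2)$ is the Hardy space on the unit bidisk with reproducing kernel $K(\lambda,z)=\frac{1}{(1-\overline{\lambda_1}z_1)(1-\overline{\lambda_2}z_2)}$. A submodule $M$ is a closed subspace invariant under multiplication by both coordinate functions; $[q]$ is the smallest submodule containing $q$. If $K^M$ is the reproducing kernel of $M$, the core function is $G^M(\lambda,z)=K^M(\lambda,z)/K(\lambda,z)$ and the core operator $C$ on $H^2(\mathbb D^2)$ is $(Cf)(z)=\int_{\mathbb T^2}G^M(\lambda,z)f(\lambda)\,dm(\lambda)$, $m$ the normalized Lebesgue measure on $\mathbb T^2$; equivalently $C=I-R_1R_1^*-R_2R_2^*+R_1R_2R_1^*R_2^*$ on $M$ and $C=0$ on $M^\perp$, where $R_1,R_2$ are multiplication by $z,w$ restricted to $M$. *)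

theory Defs
  imports "HOL-Analysis.Analysis" "HOL-Library.Function_Algebras"
begin

text \<open>Model of H^2 of the bidisk via Taylor coefficients: f(z,w) = sum a(i,j) z^i w^j
  corresponds to a :: nat * nat => complex, square summable. This is the standard unitary
  identification; the inner product is the l^2 inner product of coefficients.\<close>

type_synonym hvec = "nat \<times> nat \<Rightarrow> complex"

definition H2 :: "hvec set" where
  "H2 = {a. (\<lambda>k. (cmod (a k))\<^sup>2) summable_on UNIV}"

definition hinner :: "hvec \<Rightarrow> hvec \<Rightarrow> complex" where
  "hinner a b = (\<Sum>\<^sub>\<infinity>k. a k * cnj (b k))"

definition hnorm :: "hvec \<Rightarrow> real" where
  "hnorm a = sqrt (\<Sum>\<^sub>\<infinity>k. (cmod (a k))\<^sup>2)"

definition S1 :: "hvec \<Rightarrow> hvec" where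
  "S1 a = (\<lambda>(i, j). if i = 0 then 0 else a (i - 1, j))"

definition S2 :: "hvec \<Rightarrow> hvec" where
  "S2 a = (\<lambda>(i, j). if j = 0 then 0 else a (i, j - 1))"

definition S1adj :: "hvec \<Rightarrow> hvec" where
  "S1adj a = (\<lambda>(i, j). a (Suc i, j))"

definition S2adj :: "hvec \<Rightarrow> hvec" where
  "S2adj a = (\<lambda>(i, j). a (i, Suc j))"

definition hclosed :: "hvec set \<Rightarrow> bool" where
  "hclosed N \<longleftrightarrow> (\<forall>f\<in>H2. (\<forall>e>0. \<exists>g\<in>N. hnorm (f - g) < e) \<longrightarrow> f \<in> N)"

definition hsubspace :: "hvec set \<Rightarrow> bool" where
  "hsubspace N \<longleftrightarrow> N \<subseteq> H2 \<and> 0 \<in> N \<and>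
     (\<forall>f\<in>N. \<forall>g\<in>N. f + g \<in> N) \<and> (\<forall>c::complex. \<forall>f\<in>N. (\<lambda>k. c * f k) \<in> N)"

definition submodule :: "hvec set \<Rightarrow> bool" where
  "submodule N \<longleftrightarrow> hsubspace N \<and> hclosed N \<and> S1 ` N \<subseteq> N \<and> S2 ` N \<subseteq> N"

definition gen_submodule :: "hvec \<Rightarrow> hvec set" where
  "gen_submodule q = \<Inter> {N. submodule N \<and> q \<in> N}"

definition hproj :: "hvec set \<Rightarrow> hvec \<Rightarrow> hvec" where
  "hproj N f = (THE g. g \<in> N \<and> (\<forall>h\<in>N. hinner (f - g) h = 0))"

text \<open>Core operator: C = P_M - S1 P_M S1^* - S2 P_M S2^* + S1 S2 P_M S1^* S2^*, which equals
  I - R1R1^* - R2R2^* + R1R2R1^*R2^* on M and 0 on the orthogonal complement of M.\<close>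

definition core_op :: "hvec set \<Rightarrow> hvec \<Rightarrow> hvec" where
  "core_op N f = hproj N f - S1 (hproj N (S1adj f)) - S2 (hproj N (S2adj f))
      + S1 (S2 (hproj N (S1adj (S2adj f))))"

definition eigenvalues :: "(hvec \<Rightarrow> hvec) \<Rightarrow> complex set" where
  "eigenvalues T = {\<mu>. \<exists>f\<in>H2. f \<noteq> 0 \<and> T f = (\<lambda>k. \<mu> * f k)}"

text \<open>Coefficients of (z - w)^2 = z^2 - 2zw + w^2.\<close>

definition zw_sq :: hvec where
  "zw_sq = (\<lambda>(i, j). if (i, j) = (2, 0) \<or> (i, j) = (0, 2) then 1
                      else if (i, j) = (1, 1) then -2 else 0)"

end

theory Submission
  imports Defs
begin

text \<open>
  Write \<open>f = \<Sum>\<^sub>d f\<^sub>d\<close> as a sum of homogeneous parts. The submodule \<open>M = [(z - w)\<^sup>2]\<close>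
  consists of those \<open>f\<close> whose parts satisfy \<open>f\<^sub>d(1,1) = (\<partial>\<^sub>z f\<^sub>d)(1,1) = 0\<close>: such an \<open>f\<^sub>d\<close>
  is a multiple of \<open>w\<^sup>d\<^sup>-\<^sup>2(z - w)\<^sup>2\<close> plus \<open>z\<close> times a part of lower degree of the same kind, and
  \<open>M\<close> is closed. Hence, in each degree \<open>d\<close>, the complement of \<open>M\<close> is spanned by the coefficient
  vectors \<open>(1)\<^sub>i\<close> and \<open>(i)\<^sub>i\<close>, the projection onto \<open>M\<close> is explicit, and the core operator
  preserves degrees. It vanishes in degrees 0 and 1, is the projection onto \<open>(z - w)\<^sup>2\<close> in
  degree 2, and in degree \<open>d \<ge> 3\<close> equals \<open>(2/d)(P\<^sub>x - P\<^sub>y)\<close> for two orthogonal vectors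
  \<open>x, y \<in> M\<close>, one symmetric and one antisymmetric under \<open>z \<leftrightarrow> w\<close>.
\<close>

lemma sum_of_nat_atMost: "(\<Sum>i\<le>d. (of_nat i :: 'a::field_char_0)) = of_nat d * (of_nat d + 1) / 2"
  by (induction d) (simp_all add: field_simps)

lemma sum_of_nat_sq_atMost:
  "(\<Sum>i\<le>d. (of_nat i :: 'a::field_char_0)\<^sup>2) = of_nat d * (of_nat d + 1) * (2 * of_nat d + 1) / 6"
  by (induction d) (simp_all add: field_simps power2_eq_square)

lemma of_nat_plus_nonzero: "(of_nat d :: 'a::semiring_char_0) + 1 \<noteq> 0" "(of_nat d :: 'a) + 2 \<noteq> 0"
  by (metis of_nat_Suc of_nat_eq_0_iff nat.distinct(1) add.commute,
      metis of_nat_numeral of_nat_add of_nat_eq_0_iff add_is_0 zero_neq_numeral)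

lemma of_nat_ge_3_nonzero:
  fixes x :: "'a::ring_char_0"
  assumes "d \<ge> 3" "x = of_nat d"
  shows "x \<noteq> 0" "x + 1 \<noteq> 0" "x + 2 \<noteq> 0" "x - 1 \<noteq> 0" "x - 2 \<noteq> 0"
proof -
  have "x \<noteq> of_nat 1" "x \<noteq> of_nat 2"
    using assms by (simp_all only: of_nat_eq_iff)
  then show "x - 1 \<noteq> 0" "x - 2 \<noteq> 0"
    by simp_all
  show "x \<noteq> 0" "x + 1 \<noteq> 0" "x + 2 \<noteq> 0"
    using assms of_nat_plus_nonzero[of d, where 'a = 'a] by simp_all
qed

lemma sum_atMost_split_ends:
  fixes f :: "nat \<Rightarrow> 'a::comm_monoid_add"
  assumes "d \<ge> 1"
  shows "(\<Sum>i\<le>d. f i) = f 0 + f d + (\<Sum>i\<in>{0<..<d}. f i)"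
proof -
  have "{..d} = insert 0 (insert d {0<..<d})"
    using assms by auto
  then show ?thesis
    using assms by (simp add: add.assoc)
qed

lemma sum_atMost_override_ends:
  fixes g :: "nat \<Rightarrow> 'a::ab_group_add"
  assumes "d \<ge> 1"
  shows "(\<Sum>i\<le>d. if i = 0 then u else if i = d then v else g i) = u + v + (\<Sum>i\<le>d. g i) - g 0 - g d"
  using assms sum_atMost_split_ends[OF assms, of g]
    sum_atMost_split_ends[OF assms, of "\<lambda>i. if i = 0 then u else if i = d then v else g i"]
  by (simp add: algebra_simps)

lemma setcompr_shift_2: "{f n | n :: nat. n \<ge> 3} = {f (n + 2) | n. n \<ge> 1}"
proof (intro equalityI subsetI)
  fix x
  assume "x \<in> {f n | n. n \<ge> 3}"
  then obtain n where "n \<ge> 3" "x = f n"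
    by blast
  moreover have "Suc (Suc (n - 2)) = n"
    using \<open>n \<ge> 3\<close> by simp
  ultimately show "x \<in> {f (n + 2) | n. n \<ge> 1}"
    by (intro CollectI exI[of _ "n - 2"]) simp
qed auto

section \<open>Square-summable coefficient arrays\<close>

lemma H2_zero [simp]: "0 \<in> H2"
  by (simp add: H2_def)

lemma H2_finite_support:
  assumes "finite S" "\<And>k. k \<notin> S \<Longrightarrow> f k = 0"
  shows "f \<in> H2"
proof -
  have "(\<lambda>k. (cmod (f k))\<^sup>2) summable_on S \<longleftrightarrow> (\<lambda>k. (cmod (f k))\<^sup>2) summable_on UNIV"
    by (rule summable_on_cong_neutral) (use assms(2) in auto)
  then show ?thesis
    unfolding H2_def using assms(1) by simp
qed

lemma H2_add:
  assumes "f \<in> H2" "g \<in> H2"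
  shows "f + g \<in> H2"
proof -
  have bound: "(cmod (f k + g k))\<^sup>2 \<le> 2 * (cmod (f k))\<^sup>2 + 2 * (cmod (g k))\<^sup>2" for k
  proof -
    have "(cmod (f k + g k))\<^sup>2 \<le> (cmod (f k) + cmod (g k))\<^sup>2"
      by (simp add: power_mono norm_triangle_ineq)
    also have "\<dots> \<le> 2 * (cmod (f k))\<^sup>2 + 2 * (cmod (g k))\<^sup>2"
      using sum_squares_bound[of "cmod (f k)" "cmod (g k)"] by (simp add: power2_sum)
    finally show ?thesis .
  qed
  have "(\<lambda>k. 2 * (cmod (f k))\<^sup>2 + 2 * (cmod (g k))\<^sup>2) summable_on UNIV"
    using assms unfolding H2_def by (intro summable_on_add summable_on_cmult_right) auto
  then show ?thesis
    unfolding H2_def by (auto intro: summable_on_comparison_test bound)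
qed

lemma H2_cmult:
  assumes "f \<in> H2"
  shows "(\<lambda>k. c * f k) \<in> H2"
  using summable_on_cmult_right[of "\<lambda>k. (cmod (f k))\<^sup>2" UNIV "(cmod c)\<^sup>2"] assms
  unfolding H2_def by (simp add: norm_mult power_mult_distrib)

lemma H2_diff:
  assumes "f \<in> H2" "g \<in> H2"
  shows "f - g \<in> H2"
proof -
  have "f - g = f + (\<lambda>k. (-1) * g k)"
    by (simp add: fun_eq_iff)
  with H2_add[OF assms(1) H2_cmult[OF assms(2), of "-1"]] show ?thesis
    by (simp only:)
qed

lemma H2_inner_summable:
  assumes "f \<in> H2" "g \<in> H2"
  shows "(\<lambda>k. f k * cnj (g k)) summable_on UNIV"
proof (rule abs_summable_summable)
  have "(\<lambda>k. (cmod (f k))\<^sup>2 + (cmod (g k))\<^sup>2) summable_on UNIV"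
    using assms unfolding H2_def by (intro summable_on_add) auto
  moreover have "norm (f k * cnj (g k)) \<le> (cmod (f k))\<^sup>2 + (cmod (g k))\<^sup>2" for k
  proof -
    have "0 \<le> cmod (f k) * cmod (g k)" "2 * (cmod (f k) * cmod (g k)) \<le> (cmod (f k))\<^sup>2 + (cmod (g k))\<^sup>2"
      using sum_squares_bound[of "cmod (f k)" "cmod (g k)"] by (simp_all add: mult.assoc)
    then show ?thesis
      unfolding norm_mult complex_mod_cnj by linarith
  qed
  ultimately show "(\<lambda>k. norm (f k * cnj (g k))) summable_on UNIV"
    by (rule summable_on_comparison_test) simp_all
qed

lemma H2_comp_inj:
  assumes "f \<in> H2" "inj h"
  shows "f \<circ> h \<in> H2"
  using summable_on_subset[of "\<lambda>k. (cmod (f k))\<^sup>2" UNIV "range h"] assms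
    summable_on_reindex[OF assms(2), of "\<lambda>k. (cmod (f k))\<^sup>2"]
  unfolding H2_def by (simp add: comp_def)

lemma H2_extend_inj:
  assumes "f \<in> H2" "inj h" "\<And>k. g (h k) = f k" "\<And>k. g k \<noteq> 0 \<Longrightarrow> k \<in> range h"
  shows "g \<in> H2"
proof -
  have "((\<lambda>k. (cmod (g k))\<^sup>2) \<circ> h) summable_on UNIV"
    using assms(1,3) unfolding H2_def by (simp add: comp_def)
  then have "(\<lambda>k. (cmod (g k))\<^sup>2) summable_on range h"
    using summable_on_reindex[OF assms(2)] by blast
  moreover have "(\<lambda>k. (cmod (g k))\<^sup>2) summable_on range h \<longleftrightarrow> (\<lambda>k. (cmod (g k))\<^sup>2) summable_on UNIV"
    by (rule summable_on_cong_neutral) (use assms(4) in auto)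
  ultimately show ?thesis
    unfolding H2_def by simp
qed

lemma H2_S1: "f \<in> H2 \<Longrightarrow> S1 f \<in> H2"
proof (erule H2_extend_inj[where h = "\<lambda>(i, j). (Suc i, j)"])
  fix k :: "nat \<times> nat"
  assume "S1 f k \<noteq> 0"
  moreover obtain i j where "k = (i, j)"
    by fastforce
  ultimately show "k \<in> range (\<lambda>(i, j). (Suc i, j))"
    by (intro image_eqI[of _ _ "(i - 1, j)"]) (auto simp: S1_def split: if_splits)
qed (auto simp: inj_def S1_def)

lemma H2_S2: "f \<in> H2 \<Longrightarrow> S2 f \<in> H2"
proof (erule H2_extend_inj[where h = "\<lambda>(i, j). (i, Suc j)"])
  fix k :: "nat \<times> nat"
  assume "S2 f k \<noteq> 0"
  moreover obtain i j where "k = (i, j)"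
    by fastforce
  ultimately show "k \<in> range (\<lambda>(i, j). (i, Suc j))"
    by (intro image_eqI[of _ _ "(i, j - 1)"]) (auto simp: S2_def split: if_splits)
qed (auto simp: inj_def S2_def)

lemma H2_S1adj: "f \<in> H2 \<Longrightarrow> S1adj f \<in> H2"
  using H2_comp_inj[of f "\<lambda>(i, j). (Suc i, j)"]
  by (simp add: inj_def S1adj_def comp_def case_prod_unfold)

lemma H2_S2adj: "f \<in> H2 \<Longrightarrow> S2adj f \<in> H2"
  using H2_comp_inj[of f "\<lambda>(i, j). (i, Suc j)"]
  by (simp add: inj_def S2adj_def comp_def case_prod_unfold)

lemma S1adj_apply: "S1adj f (i, j) = f (Suc i, j)"
  by (simp add: S1adj_def)

lemma S2adj_apply: "S2adj f (i, j) = f (i, Suc j)"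
  by (simp add: S2adj_def)

lemma hnorm_nonneg: "hnorm f \<ge> 0"
  by (simp add: hnorm_def infsum_nonneg)

lemma norm_le_hnorm:
  assumes "f \<in> H2"
  shows "cmod (f k) \<le> hnorm f"
proof -
  have "(\<Sum>l\<in>{k}. (cmod (f l))\<^sup>2) \<le> (\<Sum>\<^sub>\<infinity>l. (cmod (f l))\<^sup>2)"
    using assms unfolding H2_def by (intro finite_sum_le_infsum) auto
  then show ?thesis
    unfolding hnorm_def by (simp add: real_le_rsqrt)
qed

lemma hinner_diff_left:
  assumes "f \<in> H2" "g \<in> H2" "h \<in> H2"
  shows "hinner (f - g) h = hinner f h - hinner g h"
proof -
  have "((\<lambda>k. f k * cnj (h k) + - (g k * cnj (h k))) has_sum (hinner f h + - hinner g h)) UNIV"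
    unfolding hinner_def using H2_inner_summable assms
    by (intro has_sum_add has_sum_uminus[THEN iffD2]) auto
  then show ?thesis
    unfolding hinner_def by (simp add: infsumI algebra_simps)
qed

lemma hinner_self_eq_0:
  assumes "f \<in> H2" "hinner f f = 0"
  shows "f = 0"
proof -
  have "f k * cnj (f k) = 0" for k
    using assms H2_inner_summable[OF assms(1,1)]
    by (intro nonneg_infsum_le_0D_complex[of "\<lambda>k. f k * cnj (f k)" UNIV])
       (auto simp: hinner_def complex_mult_cnj less_eq_complex_def)
  then show ?thesis
    by (simp add: fun_eq_iff)
qed

section \<open>The submodule generated by \<open>(z - w)\<^sup>2\<close>\<close>

text \<open>
  With \<open>f\<^sub>d\<close> the homogeneous part of degree \<open>d\<close>, \<open>deg_sum d f = f\<^sub>d(1,1)\<close> and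
  \<open>deg_moment d f = (\<partial>\<^sub>z f\<^sub>d)(1,1)\<close>, so \<open>Mdiag\<close> below consists of the \<open>f\<close> all of whose
  homogeneous parts vanish to second order on the diagonal \<open>z = w\<close>.
\<close>

definition deg_sum :: "nat \<Rightarrow> hvec \<Rightarrow> complex" where
  "deg_sum d f = (\<Sum>i\<le>d. f (i, d - i))"

definition deg_moment :: "nat \<Rightarrow> hvec \<Rightarrow> complex" where
  "deg_moment d f = (\<Sum>i\<le>d. of_nat i * f (i, d - i))"

lemma deg_sum_add [simp]: "deg_sum d (f + g) = deg_sum d f + deg_sum d g"
  by (simp add: deg_sum_def sum.distrib)

lemma deg_sum_diff [simp]: "deg_sum d (f - g) = deg_sum d f - deg_sum d g"
  by (simp add: deg_sum_def sum_subtractf)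

lemma deg_sum_cmult [simp]: "deg_sum d (\<lambda>k. c * f k) = c * deg_sum d f"
  by (simp add: deg_sum_def sum_distrib_left)

lemma deg_sum_zero [simp]: "deg_sum d 0 = 0"
  by (simp add: deg_sum_def)

lemma deg_moment_add [simp]: "deg_moment d (f + g) = deg_moment d f + deg_moment d g"
  by (simp add: deg_moment_def sum.distrib algebra_simps)

lemma deg_moment_diff [simp]: "deg_moment d (f - g) = deg_moment d f - deg_moment d g"
  by (simp add: deg_moment_def sum_subtractf algebra_simps)

lemma deg_moment_cmult [simp]: "deg_moment d (\<lambda>k. c * f k) = c * deg_moment d f"
  by (simp add: deg_moment_def sum_distrib_left algebra_simps)

lemma deg_moment_zero [simp]: "deg_moment d 0 = 0"
  by (simp add: deg_moment_def)

lemma deg_sum_0: "deg_sum 0 f = f (0, 0)"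
  by (simp add: deg_sum_def)

lemma deg_moment_0 [simp]: "deg_moment 0 f = 0"
  by (simp add: deg_moment_def)

lemma deg_sum_S1_0 [simp]: "deg_sum 0 (S1 g) = 0"
  by (simp add: deg_sum_def S1_def)

lemma deg_sum_S1_Suc [simp]: "deg_sum (Suc d) (S1 g) = deg_sum d g"
  unfolding deg_sum_def by (subst sum.atMost_Suc_shift) (simp add: S1_def)

lemma deg_moment_S1_Suc [simp]: "deg_moment (Suc d) (S1 g) = deg_moment d g + deg_sum d g"
  unfolding deg_sum_def deg_moment_def
  by (subst sum.atMost_Suc_shift) (simp add: S1_def sum.distrib algebra_simps)

lemma deg_sum_S2_0 [simp]: "deg_sum 0 (S2 g) = 0"
  by (simp add: deg_sum_def S2_def)

lemma deg_sum_S2_Suc [simp]: "deg_sum (Suc d) (S2 g) = deg_sum d g"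
  unfolding deg_sum_def by (subst sum.atMost_Suc) (auto simp: S2_def Suc_diff_le intro!: sum.cong)

lemma deg_moment_S2_Suc [simp]: "deg_moment (Suc d) (S2 g) = deg_moment d g"
  unfolding deg_moment_def by (subst sum.atMost_Suc) (auto simp: S2_def Suc_diff_le intro!: sum.cong)

lemma deg_sum_S1adj: "deg_sum d (S1adj g) = deg_sum (Suc d) g - g (0, Suc d)"
  unfolding deg_sum_def by (subst sum.atMost_Suc_shift) (simp add: S1adj_def)

lemma deg_moment_S1adj:
  "deg_moment d (S1adj g) = deg_moment (Suc d) g - deg_sum (Suc d) g + g (0, Suc d)"
proof -
  have "deg_moment (Suc d) g = deg_moment d (S1adj g) + deg_sum d (S1adj g)"
    unfolding deg_sum_def deg_moment_def
    by (subst sum.atMost_Suc_shift) (simp add: S1adj_def sum.distrib algebra_simps)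
  then show ?thesis
    by (simp add: deg_sum_S1adj)
qed

lemma deg_sum_S2adj: "deg_sum d (S2adj g) = deg_sum (Suc d) g - g (Suc d, 0)"
  unfolding deg_sum_def by (subst sum.atMost_Suc) (auto simp: S2adj_def Suc_diff_le intro!: sum.cong)

lemma deg_moment_S2adj:
  "deg_moment d (S2adj g) = deg_moment (Suc d) g - of_nat (Suc d) * g (Suc d, 0)"
  unfolding deg_moment_def by (subst sum.atMost_Suc) (auto simp: S2adj_def Suc_diff_le intro!: sum.cong)

definition Mdiag :: "hvec set" where
  "Mdiag = {f \<in> H2. \<forall>d. deg_sum d f = 0 \<and> deg_moment d f = 0}"

lemma Mdiag_H2: "f \<in> Mdiag \<Longrightarrow> f \<in> H2"
  by (simp add: Mdiag_def)

lemma MdiagD: "f \<in> Mdiag \<Longrightarrow> deg_sum d f = 0 \<and> deg_moment d f = 0"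
  by (simp add: Mdiag_def)

lemma norm_deg_sum_le:
  assumes "f \<in> H2"
  shows "cmod (deg_sum d f) \<le> (real d + 1)\<^sup>2 * hnorm f"
proof -
  have "cmod (deg_sum d f) \<le> (\<Sum>i\<le>d. hnorm f)"
    unfolding deg_sum_def by (rule sum_norm_le) (simp add: norm_le_hnorm assms)
  also have "\<dots> \<le> (real d + 1)\<^sup>2 * hnorm f"
    using hnorm_nonneg[of f] by (simp add: power2_eq_square mult_right_mono add.commute)
  finally show ?thesis .
qed

lemma norm_deg_moment_le:
  assumes "f \<in> H2"
  shows "cmod (deg_moment d f) \<le> (real d + 1)\<^sup>2 * hnorm f"
proof -
  have "cmod (deg_moment d f) \<le> (\<Sum>i\<le>d. (real d + 1) * hnorm f)"
    unfolding deg_moment_def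
    by (rule sum_norm_le) (simp add: norm_mult mult_mono norm_le_hnorm assms)
  then show ?thesis
    by (simp add: power2_eq_square add.commute)
qed

lemma hclosed_Mdiag: "hclosed Mdiag"
  unfolding hclosed_def
proof (intro ballI impI)
  fix f
  assume f: "f \<in> H2" and approx: "\<forall>e>0. \<exists>g\<in>Mdiag. hnorm (f - g) < e"
  have near: "\<exists>g\<in>Mdiag. (real d + 1)\<^sup>2 * hnorm (f - g) \<le> e" if "e > 0" for d e
  proof -
    have "e / (real d + 1)\<^sup>2 > 0"
      using that by simp
    then obtain g where "g \<in> Mdiag" "hnorm (f - g) < e / (real d + 1)\<^sup>2"
      using approx by blast
    then show ?thesis
      by (intro bexI[of _ g]) (simp_all add: field_simps)
  qed
  have "cmod (deg_sum d f) \<le> 0 + e \<and> cmod (deg_moment d f) \<le> 0 + e" if "e > 0" for d e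
  proof -
    obtain g where g: "g \<in> Mdiag" "(real d + 1)\<^sup>2 * hnorm (f - g) \<le> e"
      using near[OF \<open>e > 0\<close>] by blast
    have fg: "f - g \<in> H2"
      using f g by (simp add: H2_diff Mdiag_H2)
    have "deg_sum d f = deg_sum d (f - g)" "deg_moment d f = deg_moment d (f - g)"
      using MdiagD[OF g(1)] by simp_all
    then show ?thesis
      using norm_deg_sum_le[OF fg, of d] norm_deg_moment_le[OF fg, of d] g(2) by simp
  qed
  then have "cmod (deg_sum d f) \<le> 0 \<and> cmod (deg_moment d f) \<le> 0" for d
    by (meson field_le_epsilon)
  then show "f \<in> Mdiag"
    unfolding Mdiag_def using f by simp
qed

lemma zw_sq_Mdiag: "zw_sq \<in> Mdiag"
proof -
  have "zw_sq \<in> H2"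
  proof (rule H2_finite_support[of "{(2, 0), (1, 1), (0, 2)}"])
    show "zw_sq k = 0" if "k \<notin> {(2, 0), (1, 1), (0, 2)}" for k
      using that by (cases k) (simp add: zw_sq_def)
  qed simp
  moreover have "deg_sum d zw_sq = 0 \<and> deg_moment d zw_sq = 0" for d
  proof (cases "d = 2")
    case True
    then show ?thesis
      by (simp add: deg_sum_def deg_moment_def zw_sq_def numeral_2_eq_2 atMost_Suc)
  next
    case False
    then have "zw_sq (i, d - i) = 0" if "i \<le> d" for i
      using that by (auto simp: zw_sq_def)
    then show ?thesis
      by (simp add: deg_sum_def deg_moment_def)
  qed
  ultimately show ?thesis
    by (simp add: Mdiag_def)
qed

lemma submodule_Mdiag: "submodule Mdiag"
proof -
  have "S1 f \<in> Mdiag" "S2 f \<in> Mdiag" if "f \<in> Mdiag" for f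
  proof -
    have "deg_sum d (S1 f) = 0 \<and> deg_moment d (S1 f) = 0 \<and>
          deg_sum d (S2 f) = 0 \<and> deg_moment d (S2 f) = 0" for d
      using MdiagD[OF that] by (cases d) simp_all
    then show "S1 f \<in> Mdiag" "S2 f \<in> Mdiag"
      using that by (simp_all add: Mdiag_def H2_S1 H2_S2)
  qed
  then show ?thesis
    unfolding submodule_def hsubspace_def
    using hclosed_Mdiag by (auto simp: Mdiag_def H2_add H2_cmult)
qed

definition low_deg :: "nat \<Rightarrow> (nat \<times> nat) set" where
  "low_deg D = {(i, j). i + j \<le> D}"

lemma finite_low_deg: "finite (low_deg D)"
  by (rule finite_subset[of _ "{..D} \<times> {..D}"]) (auto simp: low_deg_def)

lemma sum_low_deg: "sum g (low_deg D) = (\<Sum>d\<le>D. \<Sum>i\<le>d. g (i, d - i))"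
proof -
  have "low_deg D = (\<lambda>(d, i). (i, d - i)) ` (SIGMA d:{..D}. {..d})"
  proof (intro equalityI subsetI)
    fix k
    assume "k \<in> low_deg D"
    then obtain i j where "k = (i, j)" "i + j \<le> D"
      by (auto simp: low_deg_def)
    then show "k \<in> (\<lambda>(d, i). (i, d - i)) ` (SIGMA d:{..D}. {..d})"
      by (intro image_eqI[of _ _ "(i + j, i)"]) auto
  qed (auto simp: low_deg_def)
  moreover have "inj_on (\<lambda>(d, i). (i, d - i)) (SIGMA d:{..D}. {..d})"
    by (auto simp: inj_on_def)
  ultimately show ?thesis
    by (simp add: sum.reindex sum.Sigma case_prod_unfold)
qed

lemma finite_subset_low_deg: "finite F \<Longrightarrow> \<exists>D. F \<subseteq> low_deg D"
proof -
  assume "finite F"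
  then obtain D where "\<forall>k\<in>F. fst k + snd k \<le> D"
    using finite_nat_set_iff_bounded_le[of "(\<lambda>k. fst k + snd k) ` F"] by auto
  then show ?thesis
    by (intro exI[of _ D]) (auto simp: low_deg_def)
qed

lemma has_sum_low_deg:
  assumes "(f has_sum s) UNIV"
  shows "(\<lambda>D. sum f (low_deg D)) \<longlonglongrightarrow> s"
proof -
  have "filterlim low_deg (finite_subsets_at_top UNIV) sequentially"
    unfolding filterlim_finite_subsets_at_top
  proof (intro allI impI)
    fix X :: "(nat \<times> nat) set"
    assume "finite X \<and> X \<subseteq> UNIV"
    then obtain D0 where "X \<subseteq> low_deg D0"
      using finite_subset_low_deg by blast
    then have "X \<subseteq> low_deg D" if "D \<ge> D0" for D
      using that by (auto simp: low_deg_def)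
    then show "\<forall>\<^sub>F D in sequentially. finite (low_deg D) \<and> X \<subseteq> low_deg D \<and> low_deg D \<subseteq> UNIV"
      using finite_low_deg by (auto simp: eventually_sequentially)
  qed
  then show ?thesis
    using assms filterlim_compose[of "sum f"] by (simp add: has_sum_def)
qed

definition homogeneous :: "nat \<Rightarrow> hvec \<Rightarrow> bool" where
  "homogeneous d g \<longleftrightarrow> (\<forall>i j. g (i, j) \<noteq> 0 \<longrightarrow> i + j = d)"

definition degpart :: "nat \<Rightarrow> hvec \<Rightarrow> hvec" where
  "degpart d f = (\<lambda>(i, j). if i + j = d then f (i, j) else 0)"

definition trunc :: "nat \<Rightarrow> hvec \<Rightarrow> hvec" where
  "trunc D f = (\<lambda>k. if k \<in> low_deg D then f k else 0)"

lemma homogeneous_degpart: "homogeneous d (degpart d f)"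
  by (simp add: homogeneous_def degpart_def)

lemma deg_sum_degpart: "deg_sum d (degpart d f) = deg_sum d f"
  unfolding deg_sum_def degpart_def by (rule sum.cong) auto

lemma deg_moment_degpart: "deg_moment d (degpart d f) = deg_moment d f"
  unfolding deg_moment_def degpart_def by (rule sum.cong) auto

lemma trunc_Suc: "trunc (Suc D) f = trunc D f + degpart (Suc D) f"
  by (auto simp: fun_eq_iff trunc_def degpart_def low_deg_def)

lemma ex_trunc_hnorm_less:
  assumes "f \<in> H2" "e > 0"
  shows "\<exists>D. hnorm (f - trunc D f) < e"
proof -
  define F where "F = (\<lambda>k. (cmod (f k))\<^sup>2)"
  define S where "S = infsum F UNIV"
  have F: "F summable_on UNIV"
    using assms(1) by (simp add: F_def H2_def)
  then have "(\<lambda>D. sum F (low_deg D)) \<longlonglongrightarrow> S"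
    by (intro has_sum_low_deg) (simp add: S_def)
  then obtain D where D: "dist (sum F (low_deg D)) S < e\<^sup>2"
    using assms(2) LIMSEQ_D[of _ S "e\<^sup>2"] by (auto simp: dist_norm)
  have "(\<Sum>\<^sub>\<infinity>k. (cmod ((f - trunc D f) k))\<^sup>2) = infsum F (UNIV - low_deg D)"
    by (rule infsum_cong_neutral) (auto simp: F_def trunc_def)
  also have "\<dots> = S - sum F (low_deg D)"
    unfolding S_def by (simp add: infsum_Diff F finite_low_deg)
  finally have "hnorm (f - trunc D f) = sqrt (S - sum F (low_deg D))"
    by (simp add: hnorm_def)
  also have "\<dots> < sqrt (e\<^sup>2)"
    using D by (intro real_sqrt_less_mono) (simp add: dist_real_def)
  finally show ?thesis
    using assms(2) by auto
qed

lemma submoduleD: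
  assumes "submodule N"
  shows "N \<subseteq> H2" "hclosed N" "0 \<in> N"
    and "f \<in> N \<Longrightarrow> g \<in> N \<Longrightarrow> f + g \<in> N" "f \<in> N \<Longrightarrow> (\<lambda>k. c * f k) \<in> N"
    and "f \<in> N \<Longrightarrow> S1 f \<in> N" "f \<in> N \<Longrightarrow> S2 f \<in> N"
  using assms unfolding submodule_def hsubspace_def by auto

lemma submodule_S2_pow: "submodule N \<Longrightarrow> f \<in> N \<Longrightarrow> (S2 ^^ m) f \<in> N"
  by (induction m) (simp_all add: submoduleD)

lemma homogeneous_S2:
  assumes "homogeneous d f"
  shows "homogeneous (Suc d) (S2 f)"
  unfolding homogeneous_def
proof (intro allI impI)
  fix i j
  assume "S2 f (i, j) \<noteq> 0"
  then have "j \<noteq> 0" "f (i, j - 1) \<noteq> 0"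
    by (auto simp: S2_def split: if_splits)
  then show "i + j = Suc d"
    using assms unfolding homogeneous_def by force
qed

lemma homogeneous_S1adj: "homogeneous (Suc d) f \<Longrightarrow> homogeneous d (S1adj f)"
  unfolding homogeneous_def S1adj_def by force

lemma homogeneous_S2_pow_zw_sq: "homogeneous (m + 2) ((S2 ^^ m) zw_sq)"
proof (induction m)
  case 0
  show ?case
    by (simp add: homogeneous_def zw_sq_def)
next
  case (Suc m)
  then show ?case
    using homogeneous_S2 by simp
qed

lemma S2_pow_zw_sq_corner: "(S2 ^^ m) zw_sq (0, m + 2) = 1"
  by (induction m) (simp_all add: zw_sq_def S2_def)

lemma homogeneous_deg_le_1_eq_0:
  assumes "homogeneous d g" "d \<le> 1" "deg_sum d g = 0" "deg_moment d g = 0"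
  shows "g = 0"
proof -
  have "g (i, j) = 0" for i j
  proof (cases "i + j = d")
    case True
    then consider "i = 0" "j = 0" | "i = 1" "j = 0" | "i = 0" "j = 1"
      using assms(2) by linarith
    then show ?thesis
      using True assms(3,4) by cases (auto simp: deg_sum_def deg_moment_def)
  qed (use assms(1) in \<open>auto simp: homogeneous_def\<close>)
  then show ?thesis
    by (auto simp: fun_eq_iff)
qed

lemma homogeneous_diff_cmult:
  "homogeneous d f \<Longrightarrow> homogeneous d g \<Longrightarrow> homogeneous d (f - (\<lambda>k. c * g k))"
  unfolding homogeneous_def by (metis diff_zero minus_apply mult_zero_right)

lemma S1_S1adj: "(\<And>j. h (0, j) = 0) \<Longrightarrow> S1 (S1adj h) = h"
  by (auto simp: fun_eq_iff S1_def S1adj_def)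

lemma homogeneous_in_submodule:
  assumes N: "submodule N" "zw_sq \<in> N"
  shows "homogeneous d g \<Longrightarrow> deg_sum d g = 0 \<Longrightarrow> deg_moment d g = 0 \<Longrightarrow> g \<in> N"
proof (induction d arbitrary: g)
  case 0
  then have "g = 0"
    using homogeneous_deg_le_1_eq_0[of 0 g] by simp
  then show ?case
    using submoduleD(3)[OF N(1)] by (simp only:)
next
  case (Suc d g)
  show ?case
  proof (cases "d = 0")
    case True
    then have "g = 0"
      using Suc.prems homogeneous_deg_le_1_eq_0[of "Suc d" g] by simp
    then show ?thesis
      using submoduleD(3)[OF N(1)] by (simp only:)
  next
    case False
    \<comment> \<open>Subtract the multiple of \<open>w\<^sup>d\<^sup>-\<^sup>1(z - w)\<^sup>2\<close> that cancels the coefficient of \<open>w\<^sup>d\<^sup>+\<^sup>1\<close>;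
      what remains is divisible by \<open>z\<close>, with a quotient of degree \<open>d\<close>.\<close>
    define w where "w = (S2 ^^ (d - 1)) zw_sq"
    define h where "h = g - (\<lambda>k. g (0, Suc d) * w k)"
    have "d - 1 + 2 = Suc d"
      using False by simp
    then have w: "w \<in> N" "w \<in> Mdiag" "homogeneous (Suc d) w" "w (0, Suc d) = 1"
      using submodule_S2_pow[OF N] submodule_S2_pow[OF submodule_Mdiag zw_sq_Mdiag]
        homogeneous_S2_pow_zw_sq[of "d - 1"] S2_pow_zw_sq_corner[of "d - 1"]
      by (simp_all add: w_def)
    have h_hom: "homogeneous (Suc d) h"
      unfolding h_def using Suc.prems(1) w(3) by (rule homogeneous_diff_cmult)
    have h0: "h (0, j) = 0" for j
    proof (cases "j = Suc d")
      case False
      then show ?thesis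
        using h_hom unfolding homogeneous_def by (metis add_0)
    qed (simp add: h_def w(4))
    have "deg_sum (Suc d) h = 0" "deg_moment (Suc d) h = 0"
      using Suc.prems(2,3) MdiagD[OF w(2), of "Suc d"] by (simp_all add: h_def)
    then have "S1adj h \<in> N"
      using Suc.IH[OF homogeneous_S1adj[OF h_hom]] h0 by (simp add: deg_sum_S1adj deg_moment_S1adj)
    then have "h \<in> N"
      using submoduleD(6)[OF N(1)] S1_S1adj[of h] h0 by metis
    then have "h + (\<lambda>k. g (0, Suc d) * w k) \<in> N"
      using submoduleD(4,5)[OF N(1)] w(1) by blast
    then show ?thesis
      by (simp add: h_def)
  qed
qed

lemma Mdiag_subset_submodule:
  assumes N: "submodule N" "zw_sq \<in> N"
  shows "Mdiag \<subseteq> N"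
proof
  fix f
  assume f: "f \<in> Mdiag"
  have "degpart d f \<in> N" for d
    using homogeneous_in_submodule[OF N homogeneous_degpart] MdiagD[OF f]
    by (simp add: deg_sum_degpart deg_moment_degpart)
  then have "trunc D f \<in> N" for D
  proof (induction D)
    case 0
    have "trunc 0 f = degpart 0 f"
      by (auto simp: fun_eq_iff trunc_def degpart_def low_deg_def)
    then show ?case
      using 0 by simp
  next
    case (Suc D)
    then show ?case
      using submoduleD(4)[OF N(1)] by (simp only: trunc_Suc)
  qed
  then show "f \<in> N"
    using submoduleD(2)[OF N(1)] Mdiag_H2[OF f] ex_trunc_hnorm_less
    unfolding hclosed_def by blast
qed

theorem gen_submodule_zw_sq: "gen_submodule zw_sq = Mdiag"
  unfolding gen_submodule_def
  using Mdiag_subset_submodule submodule_Mdiag zw_sq_Mdiag by blast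

section \<open>The projection onto the submodule\<close>

text \<open>
  \<open>fit d A B\<close> is the unique affine sequence \<open>i \<mapsto> \<alpha> + \<beta> i\<close> on \<open>{..d}\<close> with sum \<open>A\<close> and
  moment \<open>B\<close> (for \<open>d = 0\<close> provided \<open>B = 0\<close>). These vectors form the degree-\<open>d\<close> part of the orthogonal
  complement of \<open>Mdiag\<close>, so \<open>Qperp\<close> is the projection onto that complement.
\<close>

definition fit_const :: "nat \<Rightarrow> complex \<Rightarrow> complex \<Rightarrow> complex" where
  "fit_const d A B = (2 * (2 * of_nat d + 1) * A - 6 * B) / ((of_nat d + 1) * (of_nat d + 2))"

definition fit_slope :: "nat \<Rightarrow> complex \<Rightarrow> complex \<Rightarrow> complex" where
  "fit_slope d A B = (12 * B - 6 * of_nat d * A) / (of_nat d * (of_nat d + 1) * (of_nat d + 2))"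

definition fit :: "nat \<Rightarrow> complex \<Rightarrow> complex \<Rightarrow> nat \<Rightarrow> complex" where
  "fit d A B i = fit_const d A B + fit_slope d A B * of_nat i"

lemma sum_fit:
  assumes "d = 0 \<Longrightarrow> B = 0"
  shows "(\<Sum>i\<le>d. fit d A B i) = A"
proof -
  have "(\<Sum>i\<le>d. fit d A B i) = (of_nat d + 1) * fit_const d A B + fit_slope d A B * (\<Sum>i\<le>d. of_nat i)"
    by (simp add: fit_def sum.distrib sum_distrib_left sum_distrib_right algebra_simps)
  also have "\<dots> = A"
    using assms of_nat_plus_nonzero[of d, where 'a = complex]
    by (cases "d = 0") (simp_all add: sum_of_nat_atMost fit_const_def fit_slope_def divide_simps, algebra)
  finally show ?thesis .
qed

lemma moment_fit:
  assumes "d = 0 \<Longrightarrow> B = 0"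
  shows "(\<Sum>i\<le>d. of_nat i * fit d A B i) = B"
proof -
  have "(\<Sum>i\<le>d. of_nat i * fit d A B i)
      = fit_const d A B * (\<Sum>i\<le>d. of_nat i) + fit_slope d A B * (\<Sum>i\<le>d. (of_nat i)\<^sup>2)"
    by (simp add: fit_def sum.distrib sum_distrib_left sum_distrib_right algebra_simps power2_eq_square)
  also have "\<dots> = B"
    using assms of_nat_plus_nonzero[of d, where 'a = complex]
    by (cases "d = 0") (simp_all add: sum_of_nat_atMost sum_of_nat_sq_atMost fit_const_def
        fit_slope_def divide_simps, algebra)
  finally show ?thesis .
qed

definition Qperp :: "hvec \<Rightarrow> hvec" where
  "Qperp g = (\<lambda>(i, j). fit (i + j) (deg_sum (i + j) g) (deg_moment (i + j) g) i)"

lemma Qperp_apply: "Qperp g (i, j) = fit (i + j) (deg_sum (i + j) g) (deg_moment (i + j) g) i"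
  by (simp add: Qperp_def)

lemma deg_sum_Qperp [simp]: "deg_sum d (Qperp g) = deg_sum d g"
  using sum_fit[of d "deg_moment d g" "deg_sum d g"] by (simp add: deg_sum_def Qperp_apply)

lemma deg_moment_Qperp [simp]: "deg_moment d (Qperp g) = deg_moment d g"
  using moment_fit[of d "deg_moment d g" "deg_sum d g"] by (simp add: deg_moment_def Qperp_apply)

lemma fit_orthogonal:
  assumes "deg_sum d h = 0" "deg_moment d h = 0"
  shows "(\<Sum>i\<le>d. fit d A B i * cnj (h (i, d - i))) = 0"
proof -
  have "(\<Sum>i\<le>d. fit d A B i * cnj (h (i, d - i)))
      = fit_const d A B * cnj (deg_sum d h) + fit_slope d A B * cnj (deg_moment d h)"
    by (simp add: fit_def deg_sum_def deg_moment_def sum_distrib_left sum.distrib algebra_simps)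
  then show ?thesis
    using assms by simp
qed

lemma Qperp_bessel: "(\<Sum>i\<le>d. (cmod (Qperp g (i, d - i)))\<^sup>2) \<le> (\<Sum>i\<le>d. (cmod (g (i, d - i)))\<^sup>2)"
proof -
  define r where "r = g - Qperp g"
  have orth: "(\<Sum>i\<le>d. Qperp g (i, d - i) * cnj (r (i, d - i))) = 0"
    using fit_orthogonal[of d r] by (simp add: r_def Qperp_apply)
  have "(cmod (g (i, d - i)))\<^sup>2 = (cmod (Qperp g (i, d - i)))\<^sup>2 + (cmod (r (i, d - i)))\<^sup>2
          + 2 * Re (Qperp g (i, d - i) * cnj (r (i, d - i)))" for i
    unfolding r_def cmod_power2 by (simp add: power2_eq_square algebra_simps)
  then have "(\<Sum>i\<le>d. (cmod (g (i, d - i)))\<^sup>2)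
      = (\<Sum>i\<le>d. (cmod (Qperp g (i, d - i)))\<^sup>2) + (\<Sum>i\<le>d. (cmod (r (i, d - i)))\<^sup>2)
        + 2 * Re (\<Sum>i\<le>d. Qperp g (i, d - i) * cnj (r (i, d - i)))"
    by (simp add: sum.distrib sum_distrib_left Re_sum)
  then show ?thesis
    using orth by (simp add: sum_nonneg)
qed

lemma H2_Qperp:
  assumes "g \<in> H2"
  shows "Qperp g \<in> H2"
proof -
  let ?G = "\<lambda>k. (cmod (g k))\<^sup>2"
  have "sum (\<lambda>k. (cmod (Qperp g k))\<^sup>2) F \<le> infsum ?G UNIV" if F: "finite F" for F
  proof -
    obtain D where D: "F \<subseteq> low_deg D"
      using finite_subset_low_deg[OF F] by blast
    have "sum (\<lambda>k. (cmod (Qperp g k))\<^sup>2) F \<le> sum (\<lambda>k. (cmod (Qperp g k))\<^sup>2) (low_deg D)"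
      using D by (intro sum_mono2 finite_low_deg) auto
    also have "\<dots> \<le> sum ?G (low_deg D)"
      unfolding sum_low_deg by (intro sum_mono Qperp_bessel)
    also have "\<dots> \<le> infsum ?G UNIV"
      using assms by (intro finite_sum_le_infsum finite_low_deg) (auto simp: H2_def)
    finally show ?thesis .
  qed
  then have "(\<lambda>k. (cmod (Qperp g k))\<^sup>2) summable_on UNIV"
    by (intro nonneg_bdd_above_summable_on bdd_aboveI2) auto
  then show ?thesis
    by (simp add: H2_def)
qed

lemma Qperp_orthogonal_Mdiag:
  assumes "g \<in> H2" "h \<in> Mdiag"
  shows "hinner (Qperp g) h = 0"
proof -
  have "((\<lambda>k. Qperp g k * cnj (h k)) has_sum hinner (Qperp g) h) UNIV"
    unfolding hinner_def using H2_inner_summable[OF H2_Qperp Mdiag_H2] assms by simp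
  from has_sum_low_deg[OF this]
  have "(\<lambda>D. \<Sum>d\<le>D. \<Sum>i\<le>d. Qperp g (i, d - i) * cnj (h (i, d - i))) \<longlonglongrightarrow> hinner (Qperp g) h"
    by (simp only: sum_low_deg)
  moreover have "(\<Sum>i\<le>d. Qperp g (i, d - i) * cnj (h (i, d - i))) = 0" for d
  proof -
    have "(\<Sum>i\<le>d. Qperp g (i, d - i) * cnj (h (i, d - i)))
        = (\<Sum>i\<le>d. fit d (deg_sum d g) (deg_moment d g) i * cnj (h (i, d - i)))"
      by (rule sum.cong) (simp_all add: Qperp_apply)
    then show ?thesis
      using fit_orthogonal MdiagD[OF assms(2)] by simp
  qed
  ultimately have "(\<lambda>D. 0) \<longlonglongrightarrow> hinner (Qperp g) h"
    by simp
  then show ?thesis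
    using LIMSEQ_unique[OF tendsto_const] by metis
qed

lemma hproj_Mdiag:
  assumes g: "g \<in> H2"
  shows "hproj Mdiag g = g - Qperp g"
  unfolding hproj_def
proof (rule the_equality)
  have p0: "g - Qperp g \<in> Mdiag"
    using g by (simp add: Mdiag_def H2_diff H2_Qperp)
  then show "g - Qperp g \<in> Mdiag \<and> (\<forall>h\<in>Mdiag. hinner (g - (g - Qperp g)) h = 0)"
    using Qperp_orthogonal_Mdiag[OF g] by simp
  fix p
  assume p: "p \<in> Mdiag \<and> (\<forall>h\<in>Mdiag. hinner (g - p) h = 0)"
  define e where "e = (g - p) - Qperp g"
  have "e = (g - Qperp g) - p"
    by (simp add: e_def algebra_simps)
  then have e: "e \<in> Mdiag" "e \<in> H2"
    using p0 p by (simp_all add: Mdiag_def H2_diff)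
  have "hinner e e = hinner (g - p) e - hinner (Qperp g) e"
    unfolding e_def using g p e by (intro hinner_diff_left) (simp_all add: H2_diff H2_Qperp Mdiag_H2)
  also have "\<dots> = 0"
    using p e Qperp_orthogonal_Mdiag[OF g] by simp
  finally have "e = 0"
    using hinner_self_eq_0[OF e(2)] by simp
  then show "p = g - Qperp g"
    using \<open>e = (g - Qperp g) - p\<close> by simp
qed

section \<open>The core operator on homogeneous parts\<close>

text \<open>
  Entry \<open>(i, d - i)\<close> of the core operator applied to \<open>f\<close>, in terms of \<open>a = f(0, d)\<close>,
  \<open>b = f(d, 0)\<close>, \<open>A = deg_sum d f\<close> and \<open>B = deg_moment d f\<close>. With the projection written as
  \<open>I - Qperp\<close>, the identity parts of the four terms of \<open>core_op\<close> add up to the projection onto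
  the constants; the remaining terms are the \<open>Qperp\<close>-parts of \<open>P\<close>, \<open>S1 P S1\<^sup>*\<close>, \<open>S2 P S2\<^sup>*\<close>
  and \<open>S1 S2 P S1\<^sup>* S2\<^sup>*\<close>, evaluated on the data of \<open>f\<close>, \<open>S1\<^sup>* f\<close>, \<open>S2\<^sup>* f\<close> and \<open>S1\<^sup>* S2\<^sup>* f\<close>.
\<close>

definition core_entry :: "nat \<Rightarrow> nat \<Rightarrow> complex \<Rightarrow> complex \<Rightarrow> complex \<Rightarrow> complex \<Rightarrow> complex" where
  "core_entry d i a b A B =
     (if d = 0 then A else 0) - fit d A B i
     + (if 1 \<le> i then fit (d - 1) (A - a) (B - A + a) (i - 1) else 0)
     + (if i < d then fit (d - 1) (A - b) (B - of_nat d * b) i else 0)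
     - (if 1 \<le> i \<and> i < d then fit (d - 2) (A - b - a) (B - of_nat d * b - (A - b) + a) (i - 1) else 0)"

lemma core_op_Mdiag_apply:
  assumes f: "f \<in> H2"
  shows "core_op Mdiag f (i, j) =
    core_entry (i + j) i (f (0, i + j)) (f (i + j, 0)) (deg_sum (i + j) f) (deg_moment (i + j) f)"
proof -
  have "S1adj f \<in> H2" "S2adj f \<in> H2" "S1adj (S2adj f) \<in> H2"
    using f by (simp_all add: H2_S1adj H2_S2adj)
  then have C: "core_op Mdiag f (i, j) =
      (f - Qperp f) (i, j) - S1 (S1adj f - Qperp (S1adj f)) (i, j) - S2 (S2adj f - Qperp (S2adj f)) (i, j)
      + S1 (S2 (S1adj (S2adj f) - Qperp (S1adj (S2adj f)))) (i, j)"
    by (simp add: core_op_def hproj_Mdiag f)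
  show ?thesis
    unfolding C
    by (cases i; cases j)
       (simp_all add: S1_def S2_def S1adj_apply S2adj_apply Qperp_apply core_entry_def
         deg_sum_S1adj deg_moment_S1adj deg_sum_S2adj deg_moment_S2adj deg_sum_0)
qed

lemma core_entry_deg_le_1:
  assumes "d \<le> 1" "i \<le> d"
  shows "core_entry d i (F 0) (F d) (\<Sum>i\<le>d. F i) (\<Sum>i\<le>d. of_nat i * F i) = 0"
proof -
  consider "d = 0" "i = 0" | "d = 1" "i = 0" | "d = 1" "i = 1"
    using assms by linarith
  then show ?thesis
    by cases (simp_all add: core_entry_def fit_def fit_const_def fit_slope_def field_simps)
qed

text \<open>
  Since \<open>(3a + 3b - 2A)/6 = \<langle>f\<^sub>2, (1, -2, 1)\<rangle>/6\<close>, in degree 2 the core operator is the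
  projection onto \<open>(z - w)\<^sup>2\<close>.
\<close>

lemma core_entry_deg_2:
  assumes "i \<le> 2"
  shows "core_entry 2 i a b A (A - a + b) = (3 * a + 3 * b - 2 * A) / 6 * (if i = 1 then - 2 else 1)"
proof -
  have "i = 0 \<or> i = 1 \<or> i = 2"
    using assms by auto
  then show ?thesis
    by (elim disjE) (simp_all add: core_entry_def fit_def fit_const_def fit_slope_def field_simps
        numeral_2_eq_2)
qed

text \<open>
  For \<open>d \<ge> 3\<close>, \<open>x = sym_vec d\<close> and \<open>y = antisym_vec d\<close> are orthogonal to each other and to
  \<open>(1)\<^sub>i\<close> and \<open>(i)\<^sub>i\<close>. The functionals \<open>sym_coord\<close> and \<open>antisym_coord\<close> compute \<open>\<langle>f\<^sub>d, x\<rangle>\<close>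
  and \<open>\<langle>f\<^sub>d, y\<rangle>\<close>, and \<open>sym_gain d = (2/d)/\<parallel>x\<parallel>\<^sup>2\<close>, \<open>antisym_gain d = (2/d)/\<parallel>y\<parallel>\<^sup>2\<close>; so
  \<open>core_entry_closed_form\<close> says that the core operator acts in degree \<open>d\<close> as \<open>(2/d)(P\<^sub>x - P\<^sub>y)\<close>.
\<close>

definition sym_vec :: "nat \<Rightarrow> nat \<Rightarrow> complex" where
  "sym_vec d i = (if i = 0 then 1 else if i = d then 1 else - 2 / (of_nat d - 1))"

definition antisym_vec :: "nat \<Rightarrow> nat \<Rightarrow> complex" where
  "antisym_vec d i = (if i = 0 then 1 else if i = d then - 1
     else 6 / ((of_nat d - 1) * (of_nat d - 2)) * (2 * of_nat i - of_nat d))"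

definition sym_coord :: "nat \<Rightarrow> complex \<Rightarrow> complex \<Rightarrow> complex \<Rightarrow> complex" where
  "sym_coord d a b A = a + b - 2 / (of_nat d - 1) * (A - a - b)"

definition antisym_coord :: "nat \<Rightarrow> complex \<Rightarrow> complex \<Rightarrow> complex \<Rightarrow> complex \<Rightarrow> complex" where
  "antisym_coord d a b A B =
     a - b + 6 / ((of_nat d - 1) * (of_nat d - 2)) * (2 * (B - of_nat d * b) - of_nat d * (A - a - b))"

definition sym_gain :: "nat \<Rightarrow> complex" where
  "sym_gain d = (of_nat d - 1) / (of_nat d * (of_nat d + 1))"

definition antisym_gain :: "nat \<Rightarrow> complex" where
  "antisym_gain d = (of_nat d - 1) * (of_nat d - 2) / (of_nat d * (of_nat d + 1) * (of_nat d + 2))"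

lemma core_entry_closed_form:
  assumes "d \<ge> 3" "i \<le> d"
  shows "core_entry d i a b A B =
    sym_gain d * sym_coord d a b A * sym_vec d i - antisym_gain d * antisym_coord d a b A B * antisym_vec d i"
proof -
  define x :: complex where "x = of_nat d"
  have nz: "x \<noteq> 0" "x + 1 \<noteq> 0" "1 + x \<noteq> 0" "x + 2 \<noteq> 0" "x - 1 \<noteq> 0" "x - 2 \<noteq> 0"
    using of_nat_ge_3_nonzero[OF assms(1) x_def] by (simp_all add: add.commute)
  have d0: "d \<noteq> 0" "0 < d" "Suc 0 \<le> d"
    using assms(1) by simp_all
  have d1: "of_nat (d - Suc 0) = x - 1" and d2: "of_nat (d - 2) = x - 2"
    using assms(1) by (simp_all add: x_def of_nat_diff)
  note defs = core_entry_def fit_def fit_const_def fit_slope_def sym_vec_def antisym_vec_def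
    sym_coord_def antisym_coord_def sym_gain_def antisym_gain_def
  consider "i = 0" | "i = d" | "0 < i" "i < d"
    using assms(2) by linarith
  then show ?thesis
  proof cases
    case 1
    from nz show ?thesis
      unfolding defs x_def[symmetric]
      by (simp add: d0 d1 1 x_def[symmetric]) (simp add: divide_simps, algebra)
  next
    case 2
    from nz show ?thesis
      unfolding defs x_def[symmetric]
      by (simp add: d0 d1 2 x_def[symmetric]) (simp add: divide_simps, algebra)
  next
    case 3
    define y :: complex where "y = of_nat i"
    have i: "i \<noteq> 0" "Suc 0 \<le> i" "i \<noteq> d" "of_nat (i - Suc 0) = y - 1"
      using 3 by (simp_all add: y_def)
    with nz show ?thesis
      unfolding defs x_def[symmetric] y_def[symmetric]
      by (simp add: d0 d1 d2 3 i)
        (simp add: divide_simps, algebra)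
  qed
qed

lemma sym_part_balanced:
  assumes "d \<ge> 3"
  shows "sym_gain d * sym_coord d a b 0 = (a + b) / of_nat d"
  using of_nat_ge_3_nonzero[OF assms refl, where 'a = complex]
  unfolding sym_gain_def sym_coord_def by (simp add: divide_simps) (simp add: algebra_simps)

lemma antisym_part_balanced:
  assumes "d \<ge> 3"
  shows "antisym_gain d * antisym_coord d a b 0 0 = (a - b) / of_nat d"
  using of_nat_ge_3_nonzero[OF assms refl, where 'a = complex]
  unfolding antisym_gain_def antisym_coord_def by (simp add: divide_simps) (simp add: algebra_simps)

lemma sym_vec_orthogonal:
  assumes "d \<ge> 3"
  shows "(\<Sum>i\<le>d. sym_vec d i) = 0" "(\<Sum>i\<le>d. of_nat i * sym_vec d i) = 0"
proof -
  define x :: complex where "x = of_nat d"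
  define c where "c = - 2 / (x - 1)"
  have "x - 1 \<noteq> 0"
    using of_nat_ge_3_nonzero[OF assms x_def] by simp
  then have c: "c * (x - 1) = - 2"
    by (simp add: c_def divide_simps)
  have "(\<Sum>i\<le>d. sym_vec d i) = (\<Sum>i\<le>d. if i = 0 then 1 else if i = d then 1 else c)"
    unfolding sym_vec_def c_def x_def ..
  also have "\<dots> = 2 + (x + 1) * c - 2 * c"
    using assms by (simp add: sum_atMost_override_ends x_def)
  also have "\<dots> = 0"
    using c by (simp add: algebra_simps)
  finally show "(\<Sum>i\<le>d. sym_vec d i) = 0" .
  have "(\<Sum>i\<le>d. of_nat i * sym_vec d i) = (\<Sum>i\<le>d. if i = 0 then 0 else if i = d then x else c * of_nat i)"
    unfolding sym_vec_def c_def x_def by (rule sum.cong) simp_all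
  also have "\<dots> = x + c * (x * (x + 1) / 2) - c * x"
    using assms by (simp add: sum_atMost_override_ends sum_distrib_left[symmetric] sum_of_nat_atMost x_def)
  also have "\<dots> = x + x * (c * (x - 1)) / 2"
    by (simp add: field_simps)
  also have "\<dots> = 0"
    using c by simp
  finally show "(\<Sum>i\<le>d. of_nat i * sym_vec d i) = 0" .
qed

lemma antisym_vec_orthogonal:
  assumes "d \<ge> 3"
  shows "(\<Sum>i\<le>d. antisym_vec d i) = 0" "(\<Sum>i\<le>d. of_nat i * antisym_vec d i) = 0"
proof -
  define x :: complex where "x = of_nat d"
  define c where "c = 6 / ((x - 1) * (x - 2))"
  have "(x - 1) * (x - 2) \<noteq> 0"
    using of_nat_ge_3_nonzero[OF assms x_def] by simp
  then have c: "c * ((x - 1) * (x - 2)) = 6"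
    by (simp add: c_def)
  have "(\<Sum>i\<le>d. antisym_vec d i)
      = (\<Sum>i\<le>d. if i = 0 then 1 else if i = d then - 1 else c * (2 * of_nat i - x))"
    unfolding antisym_vec_def c_def x_def ..
  also have "\<dots> = c * (2 * (\<Sum>i\<le>d. of_nat i) - (x + 1) * x) + c * x - c * x"
    using assms
    by (simp add: sum_atMost_override_ends sum_distrib_left[symmetric] sum_distrib_right[symmetric]
        sum_subtractf x_def algebra_simps)
  also have "\<dots> = 0"
    by (simp add: sum_of_nat_atMost x_def algebra_simps)
  finally show "(\<Sum>i\<le>d. antisym_vec d i) = 0" .
  have "(\<Sum>i\<le>d. of_nat i * antisym_vec d i)
      = (\<Sum>i\<le>d. if i = 0 then 0 else if i = d then - x else c * (2 * (of_nat i)\<^sup>2 - x * of_nat i))"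
    unfolding antisym_vec_def c_def x_def
    by (rule sum.cong) (simp_all add: power2_eq_square algebra_simps)
  also have "\<dots> = - x + (\<Sum>i\<le>d. c * (2 * (of_nat i)\<^sup>2 - x * of_nat i)) - c * x\<^sup>2"
    using assms sum_atMost_override_ends[of d 0 "- x" "\<lambda>i. c * (2 * (of_nat i)\<^sup>2 - x * of_nat i)"]
    by (simp add: x_def power2_eq_square algebra_simps)
  also have "\<dots> = - x + c * (2 * (\<Sum>i\<le>d. (of_nat i)\<^sup>2) - x * (\<Sum>i\<le>d. of_nat i)) - c * x\<^sup>2"
    by (simp add: sum_subtractf sum_distrib_left algebra_simps)
  also have "\<dots> = - x + x * (c * ((x - 1) * (x - 2))) / 6"
    unfolding sum_of_nat_atMost sum_of_nat_sq_atMost x_def[symmetric]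
    by (simp add: field_simps power2_eq_square)
  also have "\<dots> = 0"
    using c by simp
  finally show "(\<Sum>i\<le>d. of_nat i * antisym_vec d i) = 0" .
qed

section \<open>Eigenvalues\<close>

lemma sym_antisym_combination_balanced:
  fixes F :: "nat \<Rightarrow> complex"
  assumes d: "d \<ge> 3" and "\<mu> \<noteq> 0"
    and F: "\<And>i. i \<le> d \<Longrightarrow> \<mu> * F i = p * sym_vec d i - q * antisym_vec d i"
  shows "(\<Sum>i\<le>d. F i) = 0" "(\<Sum>i\<le>d. of_nat i * F i) = 0"
proof -
  have "\<mu> * (\<Sum>i\<le>d. F i) = p * (\<Sum>i\<le>d. sym_vec d i) - q * (\<Sum>i\<le>d. antisym_vec d i)"
    by (simp add: sum_distrib_left sum_subtractf F)
  then show "(\<Sum>i\<le>d. F i) = 0"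
    using \<open>\<mu> \<noteq> 0\<close> sym_vec_orthogonal[OF d] antisym_vec_orthogonal[OF d] by simp
  have "\<mu> * (\<Sum>i\<le>d. of_nat i * F i) = (\<Sum>i\<le>d. of_nat i * (\<mu> * F i))"
    by (simp add: sum_distrib_left algebra_simps)
  also have "\<dots> = (\<Sum>i\<le>d. p * (of_nat i * sym_vec d i) - q * (of_nat i * antisym_vec d i))"
    by (rule sum.cong) (simp_all add: F algebra_simps)
  also have "\<dots> = p * (\<Sum>i\<le>d. of_nat i * sym_vec d i) - q * (\<Sum>i\<le>d. of_nat i * antisym_vec d i)"
    by (simp add: sum_subtractf sum_distrib_left)
  finally show "(\<Sum>i\<le>d. of_nat i * F i) = 0"
    using \<open>\<mu> \<noteq> 0\<close> sym_vec_orthogonal[OF d] antisym_vec_orthogonal[OF d] by simp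
qed

lemma block_eigenvalue_ge_3:
  fixes F :: "nat \<Rightarrow> complex"
  assumes d: "d \<ge> 3" and "\<mu> \<noteq> 0" "i0 \<le> d" "F i0 \<noteq> 0"
    and eig: "\<And>i. i \<le> d \<Longrightarrow> \<mu> * F i = core_entry d i (F 0) (F d) (\<Sum>i\<le>d. F i) (\<Sum>i\<le>d. of_nat i * F i)"
  shows "\<mu> = 2 / of_nat d \<or> \<mu> = - (2 / of_nat d)"
proof -
  define A where "A = (\<Sum>i\<le>d. F i)"
  define B where "B = (\<Sum>i\<le>d. of_nat i * F i)"
  define p where "p = sym_gain d * sym_coord d (F 0) (F d) A"
  define q where "q = antisym_gain d * antisym_coord d (F 0) (F d) A B"
  have eigF: "\<mu> * F i = p * sym_vec d i - q * antisym_vec d i" if "i \<le> d" for i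
    using eig[OF that] core_entry_closed_form[OF d that] by (simp add: p_def q_def A_def B_def)
  then have "A = 0" "B = 0"
    unfolding A_def B_def using sym_antisym_combination_balanced[OF d \<open>\<mu> \<noteq> 0\<close>] by blast+
  \<comment> \<open>So \<open>p\<close> and \<open>q\<close> only depend on \<open>F 0 \<plusminus> F d\<close>, and the equations at \<open>i = 0, d\<close> decouple.\<close>
  define t :: complex where "t = 2 / of_nat d"
  have pq: "2 * p = t * (F 0 + F d)" "2 * q = t * (F 0 - F d)"
    using sym_part_balanced[OF d] antisym_part_balanced[OF d] \<open>A = 0\<close> \<open>B = 0\<close>
    by (simp_all add: p_def q_def t_def)
  have ends: "\<mu> * F 0 = p - q" "\<mu> * F d = p + q"
    using eigF[of 0] eigF[of d] d by (simp_all add: sym_vec_def antisym_vec_def)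
  have sym: "(\<mu> - t) * (F 0 + F d) = 0" and antisym: "(\<mu> + t) * (F 0 - F d) = 0"
    using pq ends by algebra+
  show ?thesis
  proof (rule ccontr)
    assume "\<not> ?thesis"
    then have "\<mu> - t \<noteq> 0" "\<mu> + t \<noteq> 0"
      by (auto simp: t_def add_eq_0_iff)
    then have "p = 0" "q = 0"
      using sym antisym pq by simp_all
    then show False
      using eigF[OF \<open>i0 \<le> d\<close>] \<open>\<mu> \<noteq> 0\<close> \<open>F i0 \<noteq> 0\<close> by simp
  qed
qed

lemma block_eigenvalue_deg_2:
  fixes F :: "nat \<Rightarrow> complex"
  assumes "\<mu> \<noteq> 0" "i0 \<le> 2" "F i0 \<noteq> 0"
    and eig: "\<And>i. i \<le> 2 \<Longrightarrow> \<mu> * F i = core_entry 2 i (F 0) (F 2) (\<Sum>i\<le>2. F i) (\<Sum>i\<le>2. of_nat i * F i)"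
  shows "\<mu> = 1"
proof -
  define A where "A = F 0 + F 1 + F 2"
  define p where "p = (3 * F 0 + 3 * F 2 - 2 * A) / 6"
  have "(\<Sum>i\<le>2. F i) = A" "(\<Sum>i\<le>2. of_nat i * F i) = A - F 0 + F 2"
    by (simp_all add: A_def numeral_2_eq_2)
  then have eigp: "\<mu> * F i = p * (if i = 1 then - 2 else 1)" if "i \<le> 2" for i
    using eig[OF that] core_entry_deg_2[OF that] by (simp add: p_def)
  have "6 * p * \<mu> = (F 0 + F 2 - 2 * F 1) * \<mu>"
    by (simp add: p_def A_def)
  also have "\<dots> = \<mu> * F 0 + \<mu> * F 2 - 2 * (\<mu> * F 1)"
    by (simp add: algebra_simps)
  also have "\<dots> = 6 * p"
    using eigp[of 0] eigp[of 1] eigp[of 2] by simp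
  finally have "6 * p * \<mu> = 6 * p" .
  moreover have "p \<noteq> 0"
    using eigp[OF assms(2)] assms(1,3) by auto
  ultimately show ?thesis
    by simp
qed

lemma block_eigenvalue:
  fixes F :: "nat \<Rightarrow> complex"
  assumes "\<mu> \<noteq> 0" "i0 \<le> d" "F i0 \<noteq> 0"
    and eig: "\<And>i. i \<le> d \<Longrightarrow> \<mu> * F i = core_entry d i (F 0) (F d) (\<Sum>i\<le>d. F i) (\<Sum>i\<le>d. of_nat i * F i)"
  shows "\<mu> = 1 \<or> (\<exists>n\<ge>3. \<mu> = 2 / of_nat n \<or> \<mu> = - (2 / of_nat n))"
proof -
  consider "d \<le> 1" | "d = 2" | "d \<ge> 3"
    by linarith
  then show ?thesis
  proof cases
    case 1
    then show ?thesis
      using eig[OF assms(2)] core_entry_deg_le_1[OF 1 assms(2)] assms(1,3) by simp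
  next
    case 2
    then show ?thesis
      using block_eigenvalue_deg_2[OF assms(1) _ assms(3) eig[unfolded 2]] assms(2) by simp
  next
    case 3
    then show ?thesis
      using block_eigenvalue_ge_3[OF 3 assms] by blast
  qed
qed

definition diag_vec :: "nat \<Rightarrow> (nat \<Rightarrow> complex) \<Rightarrow> hvec" where
  "diag_vec d v = (\<lambda>(i, j). if i + j = d then v i else 0)"

lemma diag_vec_eigenvalue:
  assumes "v 0 \<noteq> 0"
    and eig: "\<And>i. i \<le> d \<Longrightarrow> core_entry d i (v 0) (v d) (\<Sum>i\<le>d. v i) (\<Sum>i\<le>d. of_nat i * v i) = \<mu> * v i"
  shows "\<mu> \<in> eigenvalues (core_op (gen_submodule zw_sq))"
  unfolding eigenvalues_def gen_submodule_zw_sq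
proof (intro CollectI bexI conjI)
  show H2: "diag_vec d v \<in> H2"
    by (rule H2_finite_support[OF finite_low_deg[of d]]) (auto simp: low_deg_def diag_vec_def)
  have "diag_vec d v (0, d) \<noteq> 0"
    using assms(1) by (simp add: diag_vec_def)
  then show "diag_vec d v \<noteq> 0"
    by auto
  have data: "deg_sum e (diag_vec d v) = (if e = d then (\<Sum>i\<le>d. v i) else 0)"
    "deg_moment e (diag_vec d v) = (if e = d then (\<Sum>i\<le>d. of_nat i * v i) else 0)" for e
    by (auto simp: deg_sum_def deg_moment_def diag_vec_def intro!: sum.neutral)
  show "core_op Mdiag (diag_vec d v) = (\<lambda>k. \<mu> * diag_vec d v k)"
  proof
    fix k :: "nat \<times> nat"
    obtain i j where k: "k = (i, j)"
      by fastforce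
    show "core_op Mdiag (diag_vec d v) k = \<mu> * diag_vec d v k"
    proof (cases "i + j = d")
      case True
      then show ?thesis
        unfolding k core_op_Mdiag_apply[OF H2] data using eig[of i] by (simp add: diag_vec_def)
    next
      case False
      then show ?thesis
        unfolding k core_op_Mdiag_apply[OF H2] data
        by (simp add: diag_vec_def core_entry_def fit_def fit_const_def fit_slope_def)
    qed
  qed
qed

lemma core_op_eigenvalue_cases:
  assumes "\<mu> \<in> eigenvalues (core_op (gen_submodule zw_sq))"
  shows "\<mu> = 0 \<or> \<mu> = 1 \<or> (\<exists>n\<ge>3. \<mu> = 2 / of_nat n \<or> \<mu> = - (2 / of_nat n))"
proof -
  obtain f where f: "f \<in> H2" "f \<noteq> 0" and eig: "core_op Mdiag f = (\<lambda>k. \<mu> * f k)"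
    using assms by (auto simp: eigenvalues_def gen_submodule_zw_sq)
  obtain i0 j0 where "f (i0, j0) \<noteq> 0"
    using f(2) by (auto simp: fun_eq_iff)
  moreover have "\<mu> * f (i, d - i) = core_entry d i (f (0, d)) (f (d, 0))
      (\<Sum>i\<le>d. f (i, d - i)) (\<Sum>i\<le>d. of_nat i * f (i, d - i))" if "i \<le> d" for i d
    using core_op_Mdiag_apply[OF f(1), of i "d - i"] that eig
    by (simp add: deg_sum_def deg_moment_def fun_eq_iff)
  ultimately show ?thesis
    using block_eigenvalue[of \<mu> i0 "i0 + j0" "\<lambda>i. f (i, i0 + j0 - i)"] by auto
qed

lemma sym_vec_eigenvector:
  assumes "n \<ge> 3" "i \<le> n"
  shows "core_entry n i (sym_vec n 0) (sym_vec n n) (\<Sum>i\<le>n. sym_vec n i) (\<Sum>i\<le>n. of_nat i * sym_vec n i)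
    = 2 / of_nat n * sym_vec n i"
  using assms core_entry_closed_form[OF assms] sym_vec_orthogonal[OF assms(1)]
    sym_part_balanced[OF assms(1), of 1 1] antisym_part_balanced[OF assms(1), of 1 1]
  by (simp add: sym_vec_def)

lemma antisym_vec_eigenvector:
  assumes "n \<ge> 3" "i \<le> n"
  shows "core_entry n i (antisym_vec n 0) (antisym_vec n n) (\<Sum>i\<le>n. antisym_vec n i)
      (\<Sum>i\<le>n. of_nat i * antisym_vec n i) = - (2 / of_nat n) * antisym_vec n i"
  using assms core_entry_closed_form[OF assms] antisym_vec_orthogonal[OF assms(1)]
    sym_part_balanced[OF assms(1), of 1 "- 1"] antisym_part_balanced[OF assms(1), of 1 "- 1"]
  by (simp add: antisym_vec_def)

lemma eigenvalues_core_op_zw_sq: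
  "eigenvalues (core_op (gen_submodule zw_sq)) =
     {0, 1} \<union> {2 / of_nat n | n. n \<ge> 3} \<union> {- (2 / of_nat n) | n. n \<ge> 3}"
proof (intro equalityI subsetI)
  fix \<mu> :: complex
  assume "\<mu> \<in> {0, 1} \<union> {2 / of_nat n | n. n \<ge> 3} \<union> {- (2 / of_nat n) | n. n \<ge> 3}"
  then consider "\<mu> = 0" | "\<mu> = 1" | n where "n \<ge> 3" "\<mu> = 2 / of_nat n"
    | n where "n \<ge> 3" "\<mu> = - (2 / of_nat n)"
    by blast
  then show "\<mu> \<in> eigenvalues (core_op (gen_submodule zw_sq))"
  proof cases
    case 1
    then show ?thesis
      by (intro diag_vec_eigenvalue[where d = 0 and v = "\<lambda>_. 1"])
         (simp_all add: core_entry_def fit_def fit_const_def)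
  next
    case 2
    \<comment> \<open>The eigenvector is \<open>(z - w)\<^sup>2\<close> itself.\<close>
    show ?thesis
      using core_entry_deg_2[of _ 1 1 0] 2
      by (intro diag_vec_eigenvalue[where d = 2 and v = "\<lambda>i. if i = 1 then - 2 else 1"])
         (simp_all add: numeral_2_eq_2)
  next
    case 3
    show ?thesis
      by (rule diag_vec_eigenvalue[where d = n and v = "sym_vec n"])
         (simp_all add: 3 sym_vec_eigenvector, simp add: sym_vec_def)
  next
    case 4
    show ?thesis
      by (rule diag_vec_eigenvalue[where d = n and v = "antisym_vec n"])
         (simp_all add: 4 antisym_vec_eigenvector, simp add: antisym_vec_def)
  qed
qed (use core_op_eigenvalue_cases in blast)

lemma eigenvalue_bounds:
  assumes "\<mu> \<in> {0, 1} \<union> {complex_of_real (2 / (real n + 2)) | n. n \<ge> 1}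
                  \<union> {- complex_of_real (2 / (real n + 2)) | n. n \<ge> 1}"
  shows "\<mu> \<in> \<real> \<and> Re \<mu> \<le> 1 \<and> (\<mu> \<noteq> 1 \<longrightarrow> Re \<mu> \<le> 2/3)"
proof -
  consider "\<mu> = 0" | "\<mu> = 1" | n where "n \<ge> 1" "\<mu> = complex_of_real (2 / (real n + 2))"
    | n where "n \<ge> 1" "\<mu> = - complex_of_real (2 / (real n + 2))"
    using assms by auto
  then show ?thesis
  proof cases
    case 3
    define r where "r = 2 / (real n + 2)"
    have "r \<le> 2 / 3"
      unfolding r_def using 3(1) by (intro divide_left_mono) auto
    then show ?thesis
      unfolding 3(2) r_def[symmetric] by simp
  next
    case 4
    define r where "r = 2 / (real n + 2)"
    have "r \<ge> 0"
      by (simp add: r_def)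
    then show ?thesis
      unfolding 4(2) r_def[symmetric] by simp
  qed simp_all
qed

theorem theorem3p6:
  shows "eigenvalues (core_op (gen_submodule zw_sq)) =
           {0, 1} \<union> {complex_of_real (2 / (real n + 2)) | n. n \<ge> 1}
                  \<union> {- complex_of_real (2 / (real n + 2)) | n. n \<ge> 1}
       \<and> (2/3 :: complex) \<in> eigenvalues (core_op (gen_submodule zw_sq))
       \<and> (\<forall>\<mu>\<in>eigenvalues (core_op (gen_submodule zw_sq)).
             \<mu> \<in> \<real> \<and> Re \<mu> \<le> 1 \<and> (\<mu> \<noteq> 1 \<longrightarrow> Re \<mu> \<le> 2/3))"
proof -
  have "2 / of_nat (n + 2) = complex_of_real (2 / (real n + 2))" for n
    by (simp add: add.commute)
  then have E: "eigenvalues (core_op (gen_submodule zw_sq)) =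
           {0, 1} \<union> {complex_of_real (2 / (real n + 2)) | n. n \<ge> 1}
                  \<union> {- complex_of_real (2 / (real n + 2)) | n. n \<ge> 1}"
    unfolding eigenvalues_core_op_zw_sq setcompr_shift_2[of "\<lambda>n. 2 / of_nat n"]
      setcompr_shift_2[of "\<lambda>n. - (2 / of_nat n)"] by (simp only:)
  have "(2/3 :: complex) = complex_of_real (2 / (real 1 + 2))"
    by simp
  then have "(2/3 :: complex) \<in> eigenvalues (core_op (gen_submodule zw_sq))"
    unfolding E by blast
  then show ?thesis
    using E eigenvalue_bounds by blast
qed

end
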